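(* Let $S=\langle n_1,n_2,n_3,n_4\rangle$ be a pseudo-symmetric numerical semigroup with embedding dimension $4$, with generators labeled so that the (unique) RF-matrix of $F(S)/2$ is $$\mathrm{RF}(F(S)/2)=\begin{pmatrix} -1 & \alpha_2-1 & 0 & 0\\ 0 & -1 & \alpha_3-1 & 0\\ \alpha_1-1 & 0 & -1 & \alpha_4-1\\ \alpha_1-1 & a & 0 & -1\end{pmatrix}$$ for some non-negative integer $a$ (such a labeling always exists). Then every $n_i$ is odd if and only if one of the following holds: 1) $F(S)/2$ is odd and every row of $\mathrm{RF}(F(S)/2)$ is odd; 2) $F(S)/2$ is even and every row of $\mathrm{RF}(F(S)/2)$ is even.
   Context: $F(S)=\max(\mathbb{Z}\setminus S)$. A pseudo-Frobenius number of $S$ is an integer $f\notin S$ with $f+s\in S$ for all $s\in S\setminus\{0\}$; $S$ is pseudo-symmetric if its set of pseudo-Frobenius numbers is $\{F(S)/2,F(S)\}$. For $S$ minimally generated by $n_1,\dots,n_4$, $\alpha_i$ is the least positive integer such that $\alpha_in_i$ is a non-negative integer combination of the $n_j$, $j\ne i$. For a pseudo-Frobenius number $f$, an RF-matrix of $f$ is a $4\times4$ integer matrix $(a_{ij})$ with $a_{ii}=-1$, $a_{ij}\geq 0$ for $i\neq j$, and $f=\sum_{j=1}^4 a_{ij}n_j$ for every $i$. The $i$-th row is called even (resp. odd) if $\sum_{j=1}^4 a_{ij}$ is even (resp. odd). *)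

theory Defs
  imports Main
begin

text \<open>Generators n 1, ..., n 4 are given by a function n :: nat => int on the index set {1..4};
4x4 matrices are functions nat => nat => int on {1..4} x {1..4}.\<close>

definition numerical_semigroup :: "int set \<Rightarrow> bool" where
  "numerical_semigroup S \<longleftrightarrow> S \<subseteq> {0..} \<and> 0 \<in> S \<and> (\<forall>a\<in>S. \<forall>b\<in>S. a + b \<in> S)
     \<and> finite ({0..} - S)"

definition lin_comb :: "(nat \<Rightarrow> int) \<Rightarrow> nat set \<Rightarrow> int \<Rightarrow> bool" where
  "lin_comb n I x \<longleftrightarrow> (\<exists>c :: nat \<Rightarrow> nat. x = (\<Sum>j\<in>I. int (c j) * n j))"

definition minimally_generated_by4 :: "int set \<Rightarrow> (nat \<Rightarrow> int) \<Rightarrow> bool" where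
  "minimally_generated_by4 S n \<longleftrightarrow>
     S = {x. lin_comb n {1..4} x} \<and>
     (\<forall>i\<in>{1..4::nat}. \<not> lin_comb n ({1..4} - {i}) (n i))"

definition alpha :: "(nat \<Rightarrow> int) \<Rightarrow> nat \<Rightarrow> nat" where
  "alpha n i = (LEAST k::nat. k > 0 \<and> lin_comb n ({1..4} - {i}) (int k * n i))"

definition frob :: "int set \<Rightarrow> int" where
  "frob S = (GREATEST x::int. x \<notin> S)"

definition pseudo_frobenius :: "int set \<Rightarrow> int \<Rightarrow> bool" where
  "pseudo_frobenius S f \<longleftrightarrow> f \<notin> S \<and> (\<forall>s\<in>S - {0}. f + s \<in> S)"

definition pseudo_symmetric :: "int set \<Rightarrow> bool" where
  "pseudo_symmetric S \<longleftrightarrow> even (frob S) \<and>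
     {f. pseudo_frobenius S f} = {frob S div 2, frob S}"

definition RF_matrix :: "(nat \<Rightarrow> int) \<Rightarrow> int \<Rightarrow> (nat \<Rightarrow> nat \<Rightarrow> int) \<Rightarrow> bool" where
  "RF_matrix n f A \<longleftrightarrow>
     (\<forall>i\<in>{1..4::nat}. A i i = -1) \<and>
     (\<forall>i\<in>{1..4::nat}. \<forall>j\<in>{1..4::nat}. i \<noteq> j \<longrightarrow> A i j \<ge> 0) \<and>
     (\<forall>i\<in>{1..4::nat}. f = (\<Sum>j=1..4. A i j * n j))"

definition row_sum :: "(nat \<Rightarrow> nat \<Rightarrow> int) \<Rightarrow> nat \<Rightarrow> int" where
  "row_sum A i = (\<Sum>j=1..4. A i j)"

definition special_RF :: "(nat \<Rightarrow> int) \<Rightarrow> int \<Rightarrow> nat \<Rightarrow> nat \<Rightarrow> int" where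
  "special_RF n a i j =
    (let a1 = int (alpha n 1) - 1; a2 = int (alpha n 2) - 1;
         a3 = int (alpha n 3) - 1; a4 = int (alpha n 4) - 1
     in [[-1, a2, 0, 0], [0, -1, a3, 0], [a1, 0, -1, a4], [a1, a, 0, -1]] ! (i - 1) ! (j - 1))"

end

theory Submission
  imports Defs
begin

text \<open>Everything reduces to parities. If all generators are odd, each row
  equation of an RF-matrix gives that f and the row sum have the same parity.
  Conversely, if f and all row sums of the displayed matrix share one parity,
  the rows force all generators to be odd when f is odd, and to share a common
  parity when f is even; in the latter case they are odd because a numerical
  semigroup contains odd elements.\<close>

lemma sum_atLeastAtMost_1_4: "(\<Sum>j=1..4::nat. g j) = g 1 + g 2 + g 3 + (g 4 :: int)"
  by (simp add: sum.atLeast_Suc_atMost numeral_eq_Suc)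

lemma atLeastAtMost_1_4: "{1..4::nat} = {1, 2, 3, 4}"
  by auto

lemma numerical_semigroup_has_odd_element:
  assumes "numerical_semigroup S"
  shows "\<exists>x\<in>S. odd x"
proof (rule ccontr)
  assume "\<not> ?thesis"
  then have "range (\<lambda>k::nat. 2 * int k + 1) \<subseteq> {0..} - S" by auto
  moreover have "finite ({0..} - S)"
    using assms by (simp add: numerical_semigroup_def)
  ultimately have "finite (range (\<lambda>k::nat. 2 * int k + 1))" by (rule finite_subset)
  moreover have "inj (\<lambda>k::nat. 2 * int k + 1)" by (auto simp: inj_def)
  ultimately show False using finite_imageD by blast
qed

lemma lin_comb_even:
  assumes "\<forall>j\<in>I. even (n j)" and "lin_comb n I x"
  shows "even x"
  using assms by (auto simp: lin_comb_def intro: dvd_sum)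

lemma minimally_generated_by4_odd_generator:
  assumes "numerical_semigroup S" and "minimally_generated_by4 S n"
  shows "\<exists>i\<in>{1..4::nat}. odd (n i)"
  using numerical_semigroup_has_odd_element[OF assms(1)] assms(2) lin_comb_even
  by (fastforce simp: minimally_generated_by4_def)

lemma row_sum_parity_odd_generators:
  assumes "\<forall>j\<in>{1..4::nat}. odd (n j)" and "f = (\<Sum>j=1..4. A i j * n j)"
  shows "even f \<longleftrightarrow> even (row_sum A i)"
proof -
  have "f - row_sum A i = (\<Sum>j=1..4. A i j * (n j - 1))"
    by (simp add: assms(2) row_sum_def sum_subtractf[symmetric] algebra_simps)
  also have "even \<dots>"
    using assms(1) by (intro dvd_sum) auto
  finally show ?thesis by simp
qed

lemma special_RF_rows:
  assumes "RF_matrix n f (special_RF n a)"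
  defines "b \<equiv> \<lambda>k. int (alpha n k) - 1"
  shows "f = - n 1 + b 2 * n 2" and "f = - n 2 + b 3 * n 3"
    and "f = b 1 * n 1 - n 3 + b 4 * n 4" and "f = b 1 * n 1 + a * n 2 - n 4"
proof -
  have "\<forall>i\<in>{1..4::nat}. f = (\<Sum>j=1..4. special_RF n a i j * n j)"
    using assms(1) by (simp add: RF_matrix_def)
  then show "f = - n 1 + b 2 * n 2" and "f = - n 2 + b 3 * n 3"
    and "f = b 1 * n 1 - n 3 + b 4 * n 4" and "f = b 1 * n 1 + a * n 2 - n 4"
    unfolding atLeastAtMost_1_4 sum_atLeastAtMost_1_4
    by (simp_all add: special_RF_def b_def Let_def)
qed

lemma special_RF_row_sums:
  fixes n :: "nat \<Rightarrow> int" and a :: int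
  defines "b \<equiv> \<lambda>k. int (alpha n k) - 1"
  shows "row_sum (special_RF n a) 1 = b 2 - 1" and "row_sum (special_RF n a) 2 = b 3 - 1"
    and "row_sum (special_RF n a) 3 = b 1 + b 4 - 1" and "row_sum (special_RF n a) 4 = b 1 + a - 1"
  unfolding row_sum_def sum_atLeastAtMost_1_4 by (simp_all add: special_RF_def b_def Let_def)

lemma special_RF_rows_parity:
  fixes n b :: "nat \<Rightarrow> int"
  assumes "f = - n 1 + b 2 * n 2" and "f = - n 2 + b 3 * n 3"
    and "f = b 1 * n 1 - n 3 + b 4 * n 4" and "f = b 1 * n 1 + a * n 2 - n 4"
  shows "even f \<longleftrightarrow> (even (n 1) \<longleftrightarrow> even (b 2) \<or> even (n 2))"
    and "even f \<longleftrightarrow> (even (n 2) \<longleftrightarrow> even (b 3) \<or> even (n 3))"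
    and "even f \<longleftrightarrow> (even (b 1) \<or> even (n 1) \<longleftrightarrow> (even (n 3) \<longleftrightarrow> even (b 4) \<or> even (n 4)))"
    and "even f \<longleftrightarrow> (even (b 1) \<or> even (n 1) \<longleftrightarrow> (even a \<or> even (n 2) \<longleftrightarrow> even (n 4)))"
proof -
  show "even f \<longleftrightarrow> (even (n 1) \<longleftrightarrow> even (b 2) \<or> even (n 2))"
    using assms(1) by simp blast
  show "even f \<longleftrightarrow> (even (n 2) \<longleftrightarrow> even (b 3) \<or> even (n 3))"
    using assms(2) by simp blast
  show "even f \<longleftrightarrow> (even (b 1) \<or> even (n 1) \<longleftrightarrow> (even (n 3) \<longleftrightarrow> even (b 4) \<or> even (n 4)))"
    using assms(3) by simp blast
  show "even f \<longleftrightarrow> (even (b 1) \<or> even (n 1) \<longleftrightarrow> (even a \<or> even (n 2) \<longleftrightarrow> even (n 4)))"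
    using assms(4) by simp blast
qed

lemma special_RF_odd_generators_if_odd:
  fixes n b :: "nat \<Rightarrow> int"
  assumes "f = - n 1 + b 2 * n 2" and "f = - n 2 + b 3 * n 3"
    and "f = b 1 * n 1 - n 3 + b 4 * n 4" and "f = b 1 * n 1 + a * n 2 - n 4"
    and "odd (b 2 - 1)" "odd (b 3 - 1)" "odd (b 1 + b 4 - 1)" "odd (b 1 + a - 1)"
    and "odd f"
  shows "odd (n 1) \<and> odd (n 2) \<and> odd (n 3) \<and> odd (n 4)"
proof -
  note rows = special_RF_rows_parity[OF assms(1-4)]
  have b: "even (b 2)" "even (b 3)" "even (b 1) \<longleftrightarrow> even (b 4)" "even (b 1) \<longleftrightarrow> even a"
    using assms(5-8) by simp_all
  have "odd (n 1)" "odd (n 2)"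
    using rows(1,2) b(1,2) \<open>odd f\<close> by blast+
  moreover from calculation have "odd (n 4)"
    using rows(4) b(4) \<open>odd f\<close> by blast
  moreover from calculation have "odd (n 3)"
    using rows(3) b(3) \<open>odd f\<close> by blast
  ultimately show ?thesis by blast
qed

lemma special_RF_equal_parity_if_even:
  fixes n b :: "nat \<Rightarrow> int"
  assumes "f = - n 1 + b 2 * n 2" and "f = - n 2 + b 3 * n 3"
    and "f = b 1 * n 1 - n 3 + b 4 * n 4" and "f = b 1 * n 1 + a * n 2 - n 4"
    and "even (b 2 - 1)" "even (b 3 - 1)" "even (b 1 + a - 1)"
    and "even f"
  shows "(even (n 1) \<longleftrightarrow> even (n 2)) \<and> (even (n 2) \<longleftrightarrow> even (n 3))
    \<and> (even (n 1) \<longleftrightarrow> even (n 4))"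
proof -
  note rows = special_RF_rows_parity[OF assms(1-4)]
  have "odd (b 2)" "odd (b 3)" "even (b 1) \<longleftrightarrow> odd a"
    using assms(5-7) by simp_all
  then show ?thesis
    using rows(1,2,4) \<open>even f\<close> by blast
qed

theorem proposition4p1:
  fixes S :: "int set" and n :: "nat \<Rightarrow> int" and a :: int
  assumes "numerical_semigroup S"
    and "minimally_generated_by4 S n"
    and "pseudo_symmetric S"
    and "a \<ge> 0"
    and "RF_matrix n (frob S div 2) (special_RF n a)"
  shows "(\<forall>i\<in>{1..4::nat}. odd (n i)) \<longleftrightarrow>
    ((odd (frob S div 2) \<and> (\<forall>i\<in>{1..4::nat}. odd (row_sum (special_RF n a) i))) \<or>
     (even (frob S div 2) \<and> (\<forall>i\<in>{1..4::nat}. even (row_sum (special_RF n a) i))))"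
proof -
  note rows = special_RF_rows[OF assms(5)]
  have row_parity: "even (frob S div 2) \<longleftrightarrow> even (row_sum (special_RF n a) i)"
    if "\<forall>j\<in>{1..4::nat}. odd (n j)" and "i \<in> {1..4}" for i
    using assms(5) that row_sum_parity_odd_generators by (simp add: RF_matrix_def)
  have some_odd: "odd (n 1) \<or> odd (n 2) \<or> odd (n 3) \<or> odd (n 4)"
    using minimally_generated_by4_odd_generator[OF assms(1,2)]
    unfolding atLeastAtMost_1_4 by simp
  show ?thesis
  proof
    assume "\<forall>i\<in>{1..4::nat}. odd (n i)"
    then show "odd (frob S div 2) \<and> (\<forall>i\<in>{1..4::nat}. odd (row_sum (special_RF n a) i)) \<or>
      even (frob S div 2) \<and> (\<forall>i\<in>{1..4::nat}. even (row_sum (special_RF n a) i))"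
      using row_parity by blast
  next
    assume "odd (frob S div 2) \<and> (\<forall>i\<in>{1..4::nat}. odd (row_sum (special_RF n a) i)) \<or>
      even (frob S div 2) \<and> (\<forall>i\<in>{1..4::nat}. even (row_sum (special_RF n a) i))"
    then show "\<forall>i\<in>{1..4::nat}. odd (n i)"
      using special_RF_odd_generators_if_odd[OF rows] special_RF_equal_parity_if_even[OF rows] some_odd
      unfolding atLeastAtMost_1_4 by (auto simp only: ball_simps special_RF_row_sums)
  qed
qed

end
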